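(* Let $S$ be a group and $A$ a left $S$-act without zero subacts. Then: (i) $A\amalg z_1$ and $A\amalg(z_1\amalg z_2)$ are not geometrically equivalent; (ii) $A\amalg(z_1\amalg z_2)$ and $A\amalg\coprod_{i\in I}z_i$ are geometrically equivalent for every set $I$ with $|I|>1$.
   Context: A left $S$-act is a nonempty set with an action $S\times A\to A$ satisfying $1a=a$, $(st)a=s(ta)$; homomorphisms preserve the action; $\amalg$ denotes coproduct (disjoint union). A zero $S$-act is a one-element $S$-act; $z,z_1,z_2,z_i$ denote zero $S$-acts. A zero subact of $A$ is a one-element subact (an element fixed by all of $S$). For a nonempty finite set $X$, $F_X=\coprod_{x\in X}S_x$ is the free $S$-act on $X$. For an $S$-act $G$ and a relation $T\subseteq F_X\times F_X$, $T'_G=\{\mu:F_X\to G \text{ homomorphism}: T\subseteq\ker\mu\}$ and $T''_G=\bigcap_{\mu\in T'_G}\ker\mu$ (empty intersection $=F_X\times F_X$). $S$-acts $G_1,G_2$ are geometrically equivalent iff $T''_{G_1}=T''_{G_2}$ for all nonempty finite $X$ and all $T\subseteq F_X\times F_X$. *)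

theory Defs
  imports "HOL-Algebra.Group"
begin

type_synonym ('s, 'a) sact = "'a set \<times> ('s \<Rightarrow> 'a \<Rightarrow> 'a)"

definition is_act :: "('s, 'm) monoid_scheme \<Rightarrow> ('s, 'a) sact \<Rightarrow> bool" where
  "is_act S A \<longleftrightarrow> fst A \<noteq> {} \<and>
     (\<forall>s\<in>carrier S. \<forall>a\<in>fst A. snd A s a \<in> fst A) \<and>
     (\<forall>a\<in>fst A. snd A \<one>\<^bsub>S\<^esub> a = a) \<and>
     (\<forall>s\<in>carrier S. \<forall>t\<in>carrier S. \<forall>a\<in>fst A. snd A (s \<otimes>\<^bsub>S\<^esub> t) a = snd A s (snd A t a))"

definition is_zero_act :: "('s, 'm) monoid_scheme \<Rightarrow> ('s, 'a) sact \<Rightarrow> bool" where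
  "is_zero_act S Z \<longleftrightarrow> is_act S Z \<and> (\<exists>c. fst Z = {c})"

definition has_zero_subact :: "('s, 'm) monoid_scheme \<Rightarrow> ('s, 'a) sact \<Rightarrow> bool" where
  "has_zero_subact S A \<longleftrightarrow> (\<exists>a\<in>fst A. \<forall>s\<in>carrier S. snd A s a = a)"

definition coprod :: "('s, 'a) sact \<Rightarrow> ('s, 'b) sact \<Rightarrow> ('s, 'a + 'b) sact" where
  "coprod A B = (Inl ` fst A \<union> Inr ` fst B,
     (\<lambda>s u. case u of Inl a \<Rightarrow> Inl (snd A s a) | Inr b \<Rightarrow> Inr (snd B s b)))"

definition coprod_fam :: "'i set \<Rightarrow> ('i \<Rightarrow> ('s, 'a) sact) \<Rightarrow> ('s, 'i \<times> 'a) sact" where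
  "coprod_fam I Z = (SIGMA i:I. fst (Z i), (\<lambda>s (i, a). (i, snd (Z i) s a)))"

text \<open>Free S-act on a finite set X: the element (x, s) stands for s x in S_x.\<close>
definition free_act :: "('s, 'm) monoid_scheme \<Rightarrow> 'x set \<Rightarrow> ('s, 'x \<times> 's) sact" where
  "free_act S X = (X \<times> carrier S, (\<lambda>t (x, s). (x, t \<otimes>\<^bsub>S\<^esub> s)))"

definition act_hom :: "('s, 'm) monoid_scheme \<Rightarrow> ('s, 'a) sact \<Rightarrow> ('s, 'b) sact \<Rightarrow> ('a \<Rightarrow> 'b) set" where
  "act_hom S A B = {\<mu>. (\<forall>a\<in>fst A. \<mu> a \<in> fst B) \<and>
      (\<forall>s\<in>carrier S. \<forall>a\<in>fst A. \<mu> (snd A s a) = snd B s (\<mu> a))}"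

definition act_ker :: "('s, 'a) sact \<Rightarrow> ('a \<Rightarrow> 'b) \<Rightarrow> ('a \<times> 'a) set" where
  "act_ker A \<mu> = {(u, v). u \<in> fst A \<and> v \<in> fst A \<and> \<mu> u = \<mu> v}"

definition T_prime :: "('s, 'm) monoid_scheme \<Rightarrow> 'x set \<Rightarrow> ('s, 'g) sact
    \<Rightarrow> (('x \<times> 's) \<times> ('x \<times> 's)) set \<Rightarrow> (('x \<times> 's) \<Rightarrow> 'g) set" where
  "T_prime S X G T = {\<mu> \<in> act_hom S (free_act S X) G. T \<subseteq> act_ker (free_act S X) \<mu>}"

text \<open>T''_G (empty intersection = F_X x F_X)\<close>
definition T_dprime :: "('s, 'm) monoid_scheme \<Rightarrow> 'x set \<Rightarrow> ('s, 'g) sact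
    \<Rightarrow> (('x \<times> 's) \<times> ('x \<times> 's)) set \<Rightarrow> (('x \<times> 's) \<times> ('x \<times> 's)) set" where
  "T_dprime S X G T = {(u, v). u \<in> fst (free_act S X) \<and> v \<in> fst (free_act S X) \<and>
      (\<forall>\<mu> \<in> T_prime S X G T. \<mu> u = \<mu> v)}"

text \<open>Geometric equivalence; finite sets X are taken as subsets of nat
  (every finite set is in bijection with one).\<close>
definition geom_equiv :: "('s, 'm) monoid_scheme \<Rightarrow> ('s, 'a) sact \<Rightarrow> ('s, 'b) sact \<Rightarrow> bool" where
  "geom_equiv S G1 G2 \<longleftrightarrow>
     (\<forall>X :: nat set. finite X \<and> X \<noteq> {} \<longrightarrow>
        (\<forall>T \<subseteq> fst (free_act S X) \<times> fst (free_act S X).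
           T_dprime S X G1 T = T_dprime S X G2 T))"

end

theory Submission
  imports Defs
begin

text \<open>Both parts are governed by the zero subacts, i.e. the fixed points. If the relation
  identifying every s x with x lies in the kernel of \<mu>, then \<mu> sends each generator to a
  fixed point. Since A has none, the fixed points of A \<amalg> B are those of B: in A \<amalg> z1 there
  is only one, so any two generators are identified in T'', whereas A \<amalg> (z1 \<amalg> z2) has two
  and separates them. For (ii), T''(G2) \<subseteq> T''(G1) as soon as the homomorphisms G1 \<rightarrow> G2
  separate the points of G1; between A \<amalg> B and A \<amalg> C, with S acting trivially on B and C,
  this only needs two points in C.\<close>

definition fixed_points :: "('s, 'm) monoid_scheme \<Rightarrow> ('s, 'a) sact \<Rightarrow> 'a set" where
  "fixed_points S G = {a \<in> fst G. \<forall>s\<in>carrier S. snd G s a = a}"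

lemma fst_coprod [simp]: "fst (coprod A B) = Inl ` fst A \<union> Inr ` fst B"
  by (simp add: coprod_def)

lemma fst_coprod_fam [simp]: "fst (coprod_fam I z) = (SIGMA i:I. fst (z i))"
  by (simp add: coprod_fam_def)

lemma has_zero_subact_iff_fixed_points: "has_zero_subact S A \<longleftrightarrow> fixed_points S A \<noteq> {}"
  by (auto simp: has_zero_subact_def fixed_points_def)

lemma fixed_points_zero_act:
  assumes "is_zero_act S z"
  shows "fixed_points S z = fst z"
  using assms by (auto simp: is_zero_act_def is_act_def fixed_points_def)

lemma fixed_points_coprod:
  "fixed_points S (coprod A B) = Inl ` fixed_points S A \<union> Inr ` fixed_points S B"
  by (auto simp: fixed_points_def coprod_def)

lemma fixed_points_coprod_fam:
  "fixed_points S (coprod_fam I z) = (SIGMA i:I. fixed_points S (z i))"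
  by (auto simp: fixed_points_def coprod_fam_def)

lemma T_dprime_subset_if_separating:
  assumes sep: "\<And>p q. p \<in> fst G1 \<Longrightarrow> q \<in> fst G1 \<Longrightarrow> p \<noteq> q \<Longrightarrow> \<exists>f\<in>act_hom S G1 G2. f p \<noteq> f q"
  shows "T_dprime S X G2 T \<subseteq> T_dprime S X G1 T"
proof safe
  fix u v assume uv: "(u, v) \<in> T_dprime S X G2 T"
  have "\<mu> u = \<mu> v" if \<mu>: "\<mu> \<in> T_prime S X G1 T" for \<mu>
  proof (rule ccontr)
    assume "\<mu> u \<noteq> \<mu> v"
    moreover have "\<mu> u \<in> fst G1" "\<mu> v \<in> fst G1"
      using \<mu> uv by (auto simp: T_prime_def T_dprime_def act_hom_def)
    ultimately obtain f where f: "f \<in> act_hom S G1 G2" "f (\<mu> u) \<noteq> f (\<mu> v)"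
      using sep by blast
    have "f \<circ> \<mu> \<in> T_prime S X G2 T"
      using \<mu> f(1) unfolding T_prime_def act_hom_def act_ker_def by fastforce
    with uv f(2) show False by (auto simp: T_dprime_def)
  qed
  with uv show "(u, v) \<in> T_dprime S X G1 T" by (auto simp: T_dprime_def)
qed

lemma geom_equiv_if_separating:
  assumes "\<And>p q. p \<in> fst G1 \<Longrightarrow> q \<in> fst G1 \<Longrightarrow> p \<noteq> q \<Longrightarrow> \<exists>f\<in>act_hom S G1 G2. f p \<noteq> f q"
    and "\<And>p q. p \<in> fst G2 \<Longrightarrow> q \<in> fst G2 \<Longrightarrow> p \<noteq> q \<Longrightarrow> \<exists>f\<in>act_hom S G2 G1. f p \<noteq> f q"
  shows "geom_equiv S G1 G2"
  unfolding geom_equiv_def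
  using T_dprime_subset_if_separating[OF assms(1)] T_dprime_subset_if_separating[OF assms(2)]
  by blast

lemma act_hom_map_sum:
  assumes "f \<in> act_hom S A A'" "g \<in> act_hom S B B'"
  shows "map_sum f g \<in> act_hom S (coprod A B) (coprod A' B')"
  using assms by (auto simp: act_hom_def coprod_def)

lemma act_hom_into_fixed_points:
  assumes B: "fixed_points S B = fst B" and h: "h ` fst B \<subseteq> fixed_points S C"
  shows "h \<in> act_hom S B C"
proof -
  have "snd B s b = b" "snd C s (h b) = h b" if "s \<in> carrier S" "b \<in> fst B" for s b
    using B h that unfolding fixed_points_def by blast+
  moreover have "h ` fst B \<subseteq> fst C"
    using h by (auto simp: fixed_points_def)
  ultimately show ?thesis by (auto simp: act_hom_def)
qed

lemma separating_homs_trivial_acts: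
  assumes B: "fixed_points S B = fst B" and C: "fixed_points S C = fst C"
    and c: "c \<in> fst C" "c' \<in> fst C" "c \<noteq> c'"
    and pq: "p \<noteq> q"
  shows "\<exists>h\<in>act_hom S B C. h p \<noteq> h q"
proof
  show "(\<lambda>b. if b = p then c else c') \<in> act_hom S B C"
    by (rule act_hom_into_fixed_points) (use B C c in auto)
qed (use pq c in simp)

lemma separating_homs_coprod_trivial_acts:
  assumes "fixed_points S B = fst B" "fixed_points S C = fst C"
    and "c \<in> fst C" "c' \<in> fst C" "c \<noteq> c'" and "p \<noteq> q"
  shows "\<exists>f\<in>act_hom S (coprod A B) (coprod A C). f p \<noteq> f q"
proof -
  have id: "id \<in> act_hom S A A" by (simp add: act_hom_def)
  obtain h where h: "h \<in> act_hom S B C" and "\<And>p' q'. p = Inr p' \<Longrightarrow> q = Inr q' \<Longrightarrow> h p' \<noteq> h q'"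
  proof (cases "\<exists>p' q'. p = Inr p' \<and> q = Inr q'")
    case True
    with \<open>p \<noteq> q\<close> obtain p' q' where "p = Inr p'" "q = Inr q'" "p' \<noteq> q'" by blast
    with separating_homs_trivial_acts[OF assms(1-5)] that show ?thesis by blast
  next
    case False
    have "(\<lambda>_. c) \<in> act_hom S B C"
      by (rule act_hom_into_fixed_points) (use assms in auto)
    with False that show ?thesis by blast
  qed
  then have "map_sum id h p \<noteq> map_sum id h q"
    using \<open>p \<noteq> q\<close> by (cases p; cases q) auto
  with act_hom_map_sum[OF id h] show ?thesis by blast
qed

lemma geom_equiv_coprod_trivial_acts:
  assumes "fixed_points S B = fst B" "b \<in> fst B" "b' \<in> fst B" "b \<noteq> b'"
    and "fixed_points S C = fst C" "c \<in> fst C" "c' \<in> fst C" "c \<noteq> c'"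
  shows "geom_equiv S (coprod A B) (coprod A C)"
  using assms
  by (intro geom_equiv_if_separating separating_homs_coprod_trivial_acts) blast+

definition fixing_rel :: "('s, 'm) monoid_scheme \<Rightarrow> 'x set \<Rightarrow> (('x \<times> 's) \<times> ('x \<times> 's)) set" where
  "fixing_rel S X = {((x, s), (x, \<one>\<^bsub>S\<^esub>)) | x s. x \<in> X \<and> s \<in> carrier S}"

lemma fixing_rel_subset: "monoid S \<Longrightarrow> fixing_rel S X \<subseteq> fst (free_act S X) \<times> fst (free_act S X)"
  by (auto simp: fixing_rel_def free_act_def)

lemma T_prime_fixing_rel_fixed:
  assumes S: "monoid S" and \<mu>: "\<mu> \<in> T_prime S X G (fixing_rel S X)" and x: "x \<in> X"
  shows "\<mu> (x, \<one>\<^bsub>S\<^esub>) \<in> fixed_points S G"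
proof -
  have hom: "\<mu> \<in> act_hom S (free_act S X) G" and ker: "fixing_rel S X \<subseteq> act_ker (free_act S X) \<mu>"
    using \<mu> by (auto simp: T_prime_def)
  have "snd G s (\<mu> (x, \<one>\<^bsub>S\<^esub>)) = \<mu> (x, \<one>\<^bsub>S\<^esub>)" if s: "s \<in> carrier S" for s
  proof -
    have "snd G s (\<mu> (x, \<one>\<^bsub>S\<^esub>)) = \<mu> (x, s \<otimes>\<^bsub>S\<^esub> \<one>\<^bsub>S\<^esub>)"
      using hom s x monoid.one_closed[OF S] by (simp add: act_hom_def free_act_def)
    also have "\<dots> = \<mu> (x, s)"
      using monoid.r_one[OF S s] by simp
    also have "\<dots> = \<mu> (x, \<one>\<^bsub>S\<^esub>)"
      using ker s x by (auto simp: fixing_rel_def act_ker_def)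
    finally show ?thesis .
  qed
  moreover have "\<mu> (x, \<one>\<^bsub>S\<^esub>) \<in> fst G"
    using hom x S by (auto simp: act_hom_def free_act_def)
  ultimately show ?thesis by (simp add: fixed_points_def)
qed

lemma generators_in_T_dprime_fixing_rel:
  assumes S: "monoid S" and G: "fixed_points S G \<subseteq> {g}" and xy: "x \<in> X" "y \<in> X"
  shows "((x, \<one>\<^bsub>S\<^esub>), (y, \<one>\<^bsub>S\<^esub>)) \<in> T_dprime S X G (fixing_rel S X)"
proof -
  have "\<mu> (x, \<one>\<^bsub>S\<^esub>) = \<mu> (y, \<one>\<^bsub>S\<^esub>)" if "\<mu> \<in> T_prime S X G (fixing_rel S X)" for \<mu>
    using T_prime_fixing_rel_fixed[OF S that xy(1)] T_prime_fixing_rel_fixed[OF S that xy(2)] G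
    by blast
  with S xy show ?thesis by (simp add: T_dprime_def free_act_def)
qed

lemma generators_not_in_T_dprime_fixing_rel:
  fixes S :: "('s, 'm) monoid_scheme"
  assumes S: "monoid S"
    and pq: "p \<in> fixed_points S G" "q \<in> fixed_points S G" "p \<noteq> q" and "x \<noteq> y"
  shows "((x, \<one>\<^bsub>S\<^esub>), (y, \<one>\<^bsub>S\<^esub>)) \<notin> T_dprime S X G (fixing_rel S X)"
proof -
  define \<mu> where "\<mu> = (\<lambda>(w, s :: 's). if w = x then p else q)"
  have "\<mu> \<in> T_prime S X G (fixing_rel S X)"
    using S pq unfolding T_prime_def act_hom_def act_ker_def fixing_rel_def free_act_def
      fixed_points_def \<mu>_def by auto
  moreover have "\<mu> (x, \<one>\<^bsub>S\<^esub>) \<noteq> \<mu> (y, \<one>\<^bsub>S\<^esub>)"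
    using pq \<open>x \<noteq> y\<close> by (simp add: \<mu>_def)
  ultimately show ?thesis by (auto simp: T_dprime_def)
qed

lemma not_geom_equiv_by_fixed_points:
  assumes S: "monoid S" and G1: "fixed_points S G1 \<subseteq> {g}"
    and G2: "p \<in> fixed_points S G2" "q \<in> fixed_points S G2" "p \<noteq> q"
  shows "\<not> geom_equiv S G1 G2"
proof
  define X :: "nat set" where "X = {0, 1}"
  have X: "finite X" "X \<noteq> {}" "0 \<in> X" "1 \<in> X" by (simp_all add: X_def)
  assume "geom_equiv S G1 G2"
  with X(1,2) have "\<forall>T \<subseteq> fst (free_act S X) \<times> fst (free_act S X).
      T_dprime S X G1 T = T_dprime S X G2 T"
    unfolding geom_equiv_def by blast
  with fixing_rel_subset[OF S]
  have "T_dprime S X G1 (fixing_rel S X) = T_dprime S X G2 (fixing_rel S X)"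
    by blast
  moreover have "((0, \<one>\<^bsub>S\<^esub>), (1, \<one>\<^bsub>S\<^esub>)) \<in> T_dprime S X G1 (fixing_rel S X)"
    using generators_in_T_dprime_fixing_rel[OF S G1 X(3,4)] .
  moreover have "((0, \<one>\<^bsub>S\<^esub>), (1, \<one>\<^bsub>S\<^esub>)) \<notin> T_dprime S X G2 (fixing_rel S X)"
    by (rule generators_not_in_T_dprime_fixing_rel[OF S G2]) simp
  ultimately show False by simp
qed

lemma fixed_points_coprod_zero_acts:
  assumes "is_zero_act S z1" "is_zero_act S z2"
  shows "fixed_points S (coprod z1 z2) = fst (coprod z1 z2)"
  using assms by (simp add: fixed_points_coprod fixed_points_zero_act)

lemma not_geom_equiv_coprod_one_two_zero_acts:
  assumes "monoid S" "\<not> has_zero_subact S A" "is_zero_act S z1" "is_zero_act S z2"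
  shows "\<not> geom_equiv S (coprod A z1) (coprod A (coprod z1 z2))"
proof -
  obtain c1 c2 where c: "fst z1 = {c1}" "fst z2 = {c2}"
    using assms(3,4) by (auto simp: is_zero_act_def)
  have "fixed_points S (coprod A z1) \<subseteq> {Inr c1}"
    using assms(2,3) c by (simp add: has_zero_subact_iff_fixed_points fixed_points_coprod
        fixed_points_zero_act)
  moreover have "Inr (Inl c1) \<in> fixed_points S (coprod A (coprod z1 z2))"
    and "Inr (Inr c2) \<in> fixed_points S (coprod A (coprod z1 z2))"
    using fixed_points_coprod_zero_acts[OF assms(3,4)] c by (simp_all add: fixed_points_coprod)
  ultimately show ?thesis
    by (rule not_geom_equiv_by_fixed_points[OF assms(1)]) simp
qed

lemma geom_equiv_coprod_two_many_zero_acts: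
  assumes "is_zero_act S z1" "is_zero_act S z2" "\<forall>i\<in>I. is_zero_act S (z i)"
    and "i \<in> I" "j \<in> I" "i \<noteq> j"
  shows "geom_equiv S (coprod A (coprod z1 z2)) (coprod A (coprod_fam I z))"
proof -
  obtain c1 c2 where "fst z1 = {c1}" "fst z2 = {c2}"
    using assms(1,2) by (auto simp: is_zero_act_def)
  then have c12: "Inl c1 \<in> fst (coprod z1 z2)" "Inr c2 \<in> fst (coprod z1 z2)" "Inl c1 \<noteq> Inr c2"
    by simp_all
  obtain d d' where "fst (z i) = {d}" "fst (z j) = {d'}"
    using assms(3-5) by (meson is_zero_act_def)
  with assms(4-6) have d: "(i, d) \<in> fst (coprod_fam I z)" "(j, d') \<in> fst (coprod_fam I z)"
    "(i, d) \<noteq> (j, d')"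
    by simp_all
  have "fixed_points S (coprod_fam I z) = fst (coprod_fam I z)"
    using assms(3) by (simp add: fixed_points_coprod_fam fixed_points_zero_act cong: Sigma_cong)
  from geom_equiv_coprod_trivial_acts[OF fixed_points_coprod_zero_acts[OF assms(1,2)] c12 this d]
  show ?thesis .
qed

theorem proposition3p14:
  fixes S :: "('s, 'm) monoid_scheme"
    and A :: "('s, 'a) sact"
  assumes "group S"
    and "is_act S A"
    and "\<not> has_zero_subact S A"
  shows "(\<forall>(z1 :: ('s, 'b) sact) (z2 :: ('s, 'c) sact).
            is_zero_act S z1 \<and> is_zero_act S z2 \<longrightarrow>
            \<not> geom_equiv S (coprod A z1) (coprod A (coprod z1 z2)))
       \<and> (\<forall>(z1 :: ('s, 'b) sact) (z2 :: ('s, 'c) sact) (I :: 'i set) (z :: 'i \<Rightarrow> ('s, 'd) sact).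
            is_zero_act S z1 \<and> is_zero_act S z2 \<and> (\<forall>i\<in>I. is_zero_act S (z i)) \<and>
            (\<exists>i\<in>I. \<exists>j\<in>I. i \<noteq> j) \<longrightarrow>
            geom_equiv S (coprod A (coprod z1 z2)) (coprod A (coprod_fam I z)))"
proof (intro conjI allI impI)
  fix z1 :: "('s, 'b) sact" and z2 :: "('s, 'c) sact"
  assume "is_zero_act S z1 \<and> is_zero_act S z2"
  then show "\<not> geom_equiv S (coprod A z1) (coprod A (coprod z1 z2))"
    by (simp add: not_geom_equiv_coprod_one_two_zero_acts[OF group.is_monoid[OF assms(1)] assms(3)])
next
  fix z1 :: "('s, 'b) sact" and z2 :: "('s, 'c) sact" and I :: "'i set"
    and z :: "'i \<Rightarrow> ('s, 'd) sact"
  assume zero_acts: "is_zero_act S z1 \<and> is_zero_act S z2 \<and> (\<forall>i\<in>I. is_zero_act S (z i)) \<and>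
    (\<exists>i\<in>I. \<exists>j\<in>I. i \<noteq> j)"
  then obtain i j where "i \<in> I" "j \<in> I" "i \<noteq> j" by blast
  with zero_acts show "geom_equiv S (coprod A (coprod z1 z2)) (coprod A (coprod_fam I z))"
    by (simp add: geom_equiv_coprod_two_many_zero_acts)
qed

end
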